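(* There is a universal constant $c>0$ such that the following holds. Let $n\ge1$, $N=2^n$, $\beta\in(0,1/2]$, $\epsilon\in[0,\frac{\beta}{n+1})$ and $\delta\in[0,1]$. Every $(\epsilon,\delta,\mathsf{Zipf})$-PAC quantum learner for the concept class $\mathcal{F}_n$ of all Boolean functions $\{0,1\}^n\to\{0,1\}$ uses a number $m$ of quantum examples satisfying \[ m\;\ge\; c\cdot\frac{(1-\delta)(1-H(\beta))N-H(\delta)}{n}. \]
   Context: Identify $\{0,1\}^n$ with $[N]=\{1,\dots,N\}$. The Zipf distribution on $[N]$ is $\mathsf{Zipf}(k)=\frac{1}{kH_N}$, where $H_N=\sum_{k=1}^N \frac1k$. For a concept $c:\{0,1\}^n\to\{0,1\}$ and a distribution $D$, a quantum example is one copy of the state $\sum_{x\in\{0,1\}^n}\sqrt{D(x)}\,|x\rangle|c(x)\rangle$. An $(\epsilon,\delta,D)$-PAC quantum learner for a concept class $\mathcal{C}$ is an algorithm that, for every $c\in\mathcal{C}$, given $m$ quantum examples (for $c$ and $D$), outputs a hypothesis $h:\{0,1\}^n\to\{0,1\}$ such that, with probability at least $1-\delta$, $\Pr_{x\sim D}[c(x)\ne h(x)]\le\epsilon$. $H(p)=-p\log_2p-(1-p)\log_2(1-p)$ is the binary entropy. *)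

theory Defs
  imports Complex_Main
begin

text \<open>Identify {0,1}^n with [N] = {1..N}, N = 2^n.  Boolean functions on [N] are
  represented canonically as predicates nat => bool that are False outside [N].\<close>

definition harm :: "nat \<Rightarrow> real" where
  "harm N = (\<Sum>k=1..N. 1 / real k)"

definition zipf :: "nat \<Rightarrow> nat \<Rightarrow> real" where
  "zipf N k = (if k \<in> {1..N} then 1 / (real k * harm N) else 0)"

definition bin_entropy :: "real \<Rightarrow> real" where
  "bin_entropy p = - p * log 2 p - (1 - p) * log 2 (1 - p)"

definition boolfuns :: "nat \<Rightarrow> (nat \<Rightarrow> bool) set" where
  "boolfuns N = {f. \<forall>x. x \<notin> {1..N} \<longrightarrow> \<not> f x}"

text \<open>Computational basis of m copies of the register [N] x {0,1}.\<close>
definition basis :: "nat \<Rightarrow> nat \<Rightarrow> (nat \<times> bool) list set" where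
  "basis N m = {xs. length xs = m \<and> (\<forall>p\<in>set xs. fst p \<in> {1..N})}"

text \<open>Amplitudes of one quantum example  sum_x sqrt(D x) |x>|c x>.\<close>
definition qexample :: "(nat \<Rightarrow> real) \<Rightarrow> (nat \<Rightarrow> bool) \<Rightarrow> nat \<times> bool \<Rightarrow> complex" where
  "qexample D c p = (if snd p = c (fst p) then complex_of_real (sqrt (D (fst p))) else 0)"

text \<open>Amplitudes of the m-fold tensor power of the quantum example state.\<close>
definition qexamples :: "(nat \<Rightarrow> real) \<Rightarrow> (nat \<Rightarrow> bool) \<Rightarrow> (nat \<times> bool) list \<Rightarrow> complex" where
  "qexamples D c xs = (\<Prod>p\<leftarrow>xs. qexample D c p)"

text \<open>A POVM on the m-copy space whose outcomes are hypotheses h in boolfuns N.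
  Operators are given by their matrices w.r.t. the computational basis.\<close>
definition is_povm :: "nat \<Rightarrow> nat \<Rightarrow> ((nat \<Rightarrow> bool) \<Rightarrow> (nat \<times> bool) list \<Rightarrow> (nat \<times> bool) list \<Rightarrow> complex) \<Rightarrow> bool" where
  "is_povm N m M \<longleftrightarrow>
     (\<forall>h\<in>boolfuns N. \<forall>i\<in>basis N m. \<forall>j\<in>basis N m. M h j i = cnj (M h i j)) \<and>
     (\<forall>h\<in>boolfuns N. \<forall>v :: (nat \<times> bool) list \<Rightarrow> complex.
        Re (\<Sum>i\<in>basis N m. \<Sum>j\<in>basis N m. cnj (v i) * M h i j * v j) \<ge> 0) \<and>
     (\<forall>i\<in>basis N m. \<forall>j\<in>basis N m. (\<Sum>h\<in>boolfuns N. M h i j) = (if i = j then 1 else 0))"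

definition outcome_prob ::
  "nat \<Rightarrow> nat \<Rightarrow> ((nat \<Rightarrow> bool) \<Rightarrow> (nat \<times> bool) list \<Rightarrow> (nat \<times> bool) list \<Rightarrow> complex)
   \<Rightarrow> (nat \<Rightarrow> real) \<Rightarrow> (nat \<Rightarrow> bool) \<Rightarrow> (nat \<Rightarrow> bool) \<Rightarrow> real" where
  "outcome_prob N m M D c h =
     Re (\<Sum>i\<in>basis N m. \<Sum>j\<in>basis N m. cnj (qexamples D c i) * M h i j * qexamples D c j)"

definition err :: "nat \<Rightarrow> (nat \<Rightarrow> real) \<Rightarrow> (nat \<Rightarrow> bool) \<Rightarrow> (nat \<Rightarrow> bool) \<Rightarrow> real" where
  "err N D c h = (\<Sum>x\<in>{x\<in>{1..N}. c x \<noteq> h x}. D x)"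

text \<open>A quantum learner using m quantum examples is (the most general quantum
  procedure, i.e.) a POVM on the m copies with outcomes hypotheses.\<close>
definition pac_quantum_learner ::
  "nat \<Rightarrow> real \<Rightarrow> real \<Rightarrow> (nat \<Rightarrow> real) \<Rightarrow> nat
   \<Rightarrow> ((nat \<Rightarrow> bool) \<Rightarrow> (nat \<times> bool) list \<Rightarrow> (nat \<times> bool) list \<Rightarrow> complex) \<Rightarrow> bool" where
  "pac_quantum_learner N \<epsilon> \<delta> D m M \<longleftrightarrow> is_povm N m M \<and>
     (\<forall>c\<in>boolfuns N.
        (\<Sum>h\<in>{h\<in>boolfuns N. err N D c h \<le> \<epsilon>}. outcome_prob N m M D c h) \<ge> 1 - \<delta>)"

end

theory Submission
  imports Defs
begin

text \<open>A learner is a POVM \<open>(M h)\<^sub>h\<close> on \<open>m\<close> copies of the example state, a space of dimension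
  \<open>(2N)\<^sup>m\<close>. Since each \<open>M h\<close> is positive semidefinite, the probability of outcome \<open>h\<close> is at
  most \<open>tr (M h)\<close> whatever the concept, and these traces sum to \<open>(2N)\<^sup>m\<close>. Summing the success
  probabilities over all \<open>2\<^sup>N\<close> concepts, each hypothesis \<open>h\<close> is credited at most once for every
  concept in its \<open>\<epsilon>\<close>-ball; under Zipf every point has mass at least \<open>1/(N H\<^sub>N)\<close> and
  \<open>H\<^sub>N \<le> n + 1\<close>, so these balls contain only concepts differing from \<open>h\<close> on at most \<open>\<beta>N\<close>
  points, of which there are at most \<open>2\<^bsup>H(\<beta>)N\<^esup>\<close>. Hence
  \<open>2\<^sup>N (1 - \<delta>) \<le> 2\<^bsup>H(\<beta>)N\<^esup> (2N)\<^sup>m\<close>; taking logarithms and trading the factor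
  \<open>1 - \<delta>\<close> against \<open>H(\<delta>)\<close> gives the bound with \<open>c = 1/2\<close>.\<close>

section \<open>Positive semidefinite matrices\<close>

definition qform :: "'a set \<Rightarrow> ('a \<Rightarrow> 'a \<Rightarrow> complex) \<Rightarrow> ('a \<Rightarrow> complex) \<Rightarrow> complex" where
  "qform I A v = (\<Sum>i\<in>I. \<Sum>j\<in>I. cnj (v i) * A i j * v j)"

definition psd_on :: "'a set \<Rightarrow> ('a \<Rightarrow> 'a \<Rightarrow> complex) \<Rightarrow> bool" where
  "psd_on I A \<longleftrightarrow> (\<forall>v. Re (qform I A v) \<ge> 0)"

lemma qform_supported:
  assumes "finite I" "J \<subseteq> I" "\<And>k. k \<notin> J \<Longrightarrow> v k = 0"
  shows "qform I A v = qform J A v"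
proof -
  have inner: "(\<Sum>j\<in>I. cnj (v i) * A i j * v j) = (\<Sum>j\<in>J. cnj (v i) * A i j * v j)" for i
    by (rule sum.mono_neutral_right) (use assms in auto)
  show ?thesis
    unfolding qform_def inner by (rule sum.mono_neutral_right) (use assms in auto)
qed

lemma psd_on_diag_nonneg:
  assumes "finite I" "psd_on I A" "i \<in> I"
  shows "Re (A i i) \<ge> 0"
proof -
  let ?v = "\<lambda>k. if k = i then 1 else 0"
  have "qform I A ?v = qform {i} A ?v" by (rule qform_supported) (use assms in auto)
  then have "qform I A ?v = A i i" by (simp add: qform_def)
  then show ?thesis using assms(2) unfolding psd_on_def by metis
qed

lemma cnj_mult_mult_self: "cnj z * w * z = complex_of_real ((cmod z)^2) * w"
proof -
  have "cnj z * w * z = (z * cnj z) * w" by (simp add: algebra_simps)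
  then show ?thesis by (simp only: complex_norm_square)
qed

lemma sgn_mult_of_real_cmod: "sgn z * complex_of_real (cmod z) = z"
  by (cases "z = 0") (simp_all add: sgn_eq)

lemma psd_on_pair:
  assumes fin: "finite I" and psd: "psd_on I A" and i: "i \<in> I" and j: "j \<in> I"
  shows "Re (cnj (\<psi> i) * A i j * \<psi> j) + Re (cnj (\<psi> j) * A j i * \<psi> i)
          \<le> (cmod (\<psi> j))^2 * Re (A i i) + (cmod (\<psi> i))^2 * Re (A j j)"
proof (cases "i = j")
  case True
  then show ?thesis by (simp add: cnj_mult_mult_self)
next
  case False
  \<comment> \<open>test vector \<open>|\<psi> j| sgn (\<psi> i) e\<^sub>i - |\<psi> i| sgn (\<psi> j) e\<^sub>j\<close>\<close>
  define a where "a = sgn (\<psi> i) * complex_of_real (cmod (\<psi> j))"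
  define b where "b = - sgn (\<psi> j) * complex_of_real (cmod (\<psi> i))"
  define v where "v = (\<lambda>k. if k = i then a else if k = j then b else 0)"
  have cross_ij: "cnj a * A i j * b = - (cnj (\<psi> i) * A i j * \<psi> j)"
  proof -
    have "cnj a * A i j * b = - (cnj (sgn (\<psi> i) * complex_of_real (cmod (\<psi> i))) * A i j
        * (sgn (\<psi> j) * complex_of_real (cmod (\<psi> j))))"
      by (simp add: a_def b_def algebra_simps)
    then show ?thesis by (simp only: sgn_mult_of_real_cmod)
  qed
  have cross_ji: "cnj b * A j i * a = - (cnj (\<psi> j) * A j i * \<psi> i)"
  proof -
    have "cnj b * A j i * a = - (cnj (sgn (\<psi> j) * complex_of_real (cmod (\<psi> j))) * A j i
        * (sgn (\<psi> i) * complex_of_real (cmod (\<psi> i))))"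
      by (simp add: a_def b_def algebra_simps)
    then show ?thesis by (simp only: sgn_mult_of_real_cmod)
  qed
  have "qform I A v = qform {i, j} A v" by (rule qform_supported) (use fin i j in \<open>auto simp: v_def\<close>)
  also have "\<dots> = cnj a * A i i * a + cnj b * A j j * b + cnj a * A i j * b + cnj b * A j i * a"
    using False by (simp add: qform_def v_def)
  finally have "Re (qform I A v) = (cmod a)^2 * Re (A i i) + (cmod b)^2 * Re (A j j)
      - Re (cnj (\<psi> i) * A i j * \<psi> j) - Re (cnj (\<psi> j) * A j i * \<psi> i)"
    unfolding cross_ij cross_ji by (simp add: cnj_mult_mult_self)
  moreover have "Re (qform I A v) \<ge> 0" using psd unfolding psd_on_def by blast
  moreover have "(cmod a)^2 * Re (A i i) \<le> (cmod (\<psi> j))^2 * Re (A i i)"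
    using psd_on_diag_nonneg[OF fin psd i] unfolding a_def
    by (intro mult_right_mono) (simp_all add: norm_mult norm_sgn)
  moreover have "(cmod b)^2 * Re (A j j) \<le> (cmod (\<psi> i))^2 * Re (A j j)"
    using psd_on_diag_nonneg[OF fin psd j] unfolding b_def
    by (intro mult_right_mono) (simp_all add: norm_mult norm_sgn)
  ultimately show ?thesis by linarith
qed

lemma qform_le_norm_trace:
  assumes fin: "finite I" and psd: "psd_on I A"
  shows "Re (qform I A \<psi>) \<le> (\<Sum>i\<in>I. (cmod (\<psi> i))^2) * (\<Sum>i\<in>I. Re (A i i))"
proof -
  let ?c = "\<lambda>i j. Re (cnj (\<psi> i) * A i j * \<psi> j)"
  let ?d = "\<lambda>i j. (cmod (\<psi> j))^2 * Re (A i i)"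
  have re: "Re (qform I A \<psi>) = (\<Sum>i\<in>I. \<Sum>j\<in>I. ?c i j)"
    unfolding qform_def by (simp add: Re_sum)
  have "2 * Re (qform I A \<psi>) = (\<Sum>i\<in>I. \<Sum>j\<in>I. ?c i j) + (\<Sum>i\<in>I. \<Sum>j\<in>I. ?c j i)"
    unfolding re sum.swap[of ?c I I] by simp
  also have "\<dots> = (\<Sum>i\<in>I. \<Sum>j\<in>I. ?c i j + ?c j i)"
    by (simp add: sum.distrib)
  also have "\<dots> \<le> (\<Sum>i\<in>I. \<Sum>j\<in>I. ?d i j + ?d j i)"
    by (intro sum_mono psd_on_pair[OF fin psd])
  also have "\<dots> = (\<Sum>i\<in>I. \<Sum>j\<in>I. ?d i j) + (\<Sum>i\<in>I. \<Sum>j\<in>I. ?d j i)"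
    by (simp add: sum.distrib)
  also have "\<dots> = 2 * (\<Sum>i\<in>I. \<Sum>j\<in>I. ?d i j)"
    unfolding sum.swap[of ?d I I] by simp
  also have "\<dots> = 2 * ((\<Sum>i\<in>I. (cmod (\<psi> i))^2) * (\<Sum>i\<in>I. Re (A i i)))"
    by (simp add: sum_product mult.commute)
  finally show ?thesis by simp
qed

section \<open>Quantum examples and POVMs\<close>

lemma sum_prod_list_lists_length:
  fixes g :: "'a \<Rightarrow> 'b::comm_semiring_1"
  shows "(\<Sum>xs\<in>{xs. set xs \<subseteq> A \<and> length xs = m}. prod_list (map g xs)) = sum g A ^ m"
proof (induction m)
  case 0
  have "{xs. set xs \<subseteq> A \<and> length xs = 0} = {[]}" by auto
  then show ?case by simp
next
  case (Suc m)
  let ?L = "\<lambda>m. {xs. set xs \<subseteq> A \<and> length xs = m}"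
  have L_Suc: "?L (Suc m) = (\<lambda>(a, xs). a # xs) ` (A \<times> ?L m)"
    by (auto simp: length_Suc_conv image_iff)
  have inj: "inj_on (\<lambda>(a, xs). a # xs) (A \<times> ?L m)" by (auto simp: inj_on_def)
  have "(\<Sum>xs\<in>?L (Suc m). prod_list (map g xs)) = (\<Sum>(a, xs)\<in>A \<times> ?L m. g a * prod_list (map g xs))"
    unfolding L_Suc by (subst sum.reindex[OF inj]) (simp add: case_prod_beta)
  also have "\<dots> = (\<Sum>a\<in>A. g a * (\<Sum>xs\<in>?L m. prod_list (map g xs)))"
    by (simp add: sum.cartesian_product[symmetric] sum_distrib_left)
  also have "\<dots> = sum g A ^ Suc m" by (simp add: Suc sum_distrib_right)
  finally show ?case .
qed

lemma basis_eq_lists: "basis N m = {xs. set xs \<subseteq> {1..N} \<times> UNIV \<and> length xs = m}"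
  unfolding basis_def by auto

lemma finite_basis: "finite (basis N m)"
  unfolding basis_eq_lists by (rule finite_lists_length_eq) simp

lemma card_basis: "card (basis N m) = (2 * N)^m"
  unfolding basis_eq_lists
  by (subst card_lists_length_eq) (simp_all add: card_cartesian_product mult.commute)

lemma cmod_prod_list_power2:
  "(cmod (prod_list (map f xs)))^2 = prod_list (map (\<lambda>p. (cmod (f p))^2) xs)"
  by (induction xs) (simp_all add: norm_mult power_mult_distrib)

lemma norm_qexamples:
  assumes D_nonneg: "\<And>x. x \<in> {1..N} \<Longrightarrow> D x \<ge> 0" and D_sum: "(\<Sum>x\<in>{1..N}. D x) = 1"
  shows "(\<Sum>xs\<in>basis N m. (cmod (qexamples D c xs))^2) = 1"
proof -
  let ?g = "\<lambda>p. (cmod (qexample D c p))^2"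
  have g: "(\<Sum>b\<in>UNIV. ?g (x, b)) = D x" if "x \<in> {1..N}" for x
    using D_nonneg[OF that] by (cases "c x") (simp_all add: UNIV_bool qexample_def)
  have "(\<Sum>xs\<in>basis N m. (cmod (qexamples D c xs))^2) = sum ?g ({1..N} \<times> UNIV) ^ m"
    unfolding basis_eq_lists qexamples_def cmod_prod_list_power2
    by (rule sum_prod_list_lists_length)
  also have "sum ?g ({1..N} \<times> UNIV) = (\<Sum>x\<in>{1..N}. \<Sum>b\<in>UNIV. ?g (x, b))"
    by (simp add: sum.cartesian_product)
  also have "\<dots> = 1" using g D_sum by simp
  finally show ?thesis by simp
qed

lemma outcome_prob_eq_qform:
  "outcome_prob N m M D c h = Re (qform (basis N m) (M h) (qexamples D c))"
  unfolding outcome_prob_def qform_def ..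

lemma povm_psd_on: "is_povm N m M \<Longrightarrow> h \<in> boolfuns N \<Longrightarrow> psd_on (basis N m) (M h)"
  unfolding is_povm_def psd_on_def qform_def by blast

lemma outcome_prob_le_trace:
  assumes "is_povm N m M" "h \<in> boolfuns N"
    and "\<And>x. x \<in> {1..N} \<Longrightarrow> D x \<ge> 0" "(\<Sum>x\<in>{1..N}. D x) = 1"
  shows "outcome_prob N m M D c h \<le> (\<Sum>i\<in>basis N m. Re (M h i i))"
proof -
  have "Re (qform (basis N m) (M h) (qexamples D c))
      \<le> (\<Sum>i\<in>basis N m. (cmod (qexamples D c i))^2) * (\<Sum>i\<in>basis N m. Re (M h i i))"
    by (rule qform_le_norm_trace[OF finite_basis povm_psd_on[OF assms(1,2)]])
  then show ?thesis using norm_qexamples[OF assms(3,4)] by (simp add: outcome_prob_eq_qform)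
qed

lemma povm_trace_nonneg:
  "is_povm N m M \<Longrightarrow> h \<in> boolfuns N \<Longrightarrow> (\<Sum>i\<in>basis N m. Re (M h i i)) \<ge> 0"
  by (intro sum_nonneg psd_on_diag_nonneg[OF finite_basis povm_psd_on])

lemma sum_povm_trace:
  assumes "is_povm N m M"
  shows "(\<Sum>h\<in>boolfuns N. \<Sum>i\<in>basis N m. Re (M h i i)) = real ((2 * N)^m)"
proof -
  have "\<forall>i\<in>basis N m. \<forall>j\<in>basis N m. (\<Sum>h\<in>boolfuns N. M h i j) = (if i = j then 1 else 0)"
    using assms unfolding is_povm_def by blast
  then have "(\<Sum>h\<in>boolfuns N. M h i i) = 1" if "i \<in> basis N m" for i
    using that by simp
  then have "(\<Sum>h\<in>boolfuns N. \<Sum>i\<in>basis N m. Re (M h i i)) = (\<Sum>i\<in>basis N m. 1)"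
    by (subst sum.swap) (simp add: Re_sum[symmetric])
  then show ?thesis by (simp add: card_basis)
qed

section \<open>Counting concepts and small sets\<close>

lemma boolfuns_eq_image_Pow: "boolfuns N = (\<lambda>S x. x \<in> S) ` Pow {1..N}"
proof
  show "boolfuns N \<subseteq> (\<lambda>S x. x \<in> S) ` Pow {1..N}"
  proof
    fix f assume "f \<in> boolfuns N"
    then have "f = (\<lambda>x. x \<in> {x\<in>{1..N}. f x})" unfolding boolfuns_def by auto
    then show "f \<in> (\<lambda>S x. x \<in> S) ` Pow {1..N}" by blast
  qed
qed (auto simp: boolfuns_def)

lemma finite_boolfuns: "finite (boolfuns N)"
  unfolding boolfuns_eq_image_Pow by simp

lemma card_boolfuns: "card (boolfuns N) = 2^N"
proof -
  have "inj_on (\<lambda>S x. x \<in> S) (Pow {1..N})" by (auto simp: inj_on_def fun_eq_iff)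
  then show ?thesis unfolding boolfuns_eq_image_Pow by (simp add: card_image card_Pow)
qed

lemma pac_quantum_learner_card_le:
  assumes L: "pac_quantum_learner N \<epsilon> \<delta> D m M"
    and D: "\<And>x. x \<in> {1..N} \<Longrightarrow> D x \<ge> 0" "(\<Sum>x\<in>{1..N}. D x) = 1"
    and ball: "\<And>h. h \<in> boolfuns N \<Longrightarrow> card {c\<in>boolfuns N. err N D c h \<le> \<epsilon>} \<le> B"
  shows "2^N * (1 - \<delta>) \<le> real B * real ((2 * N)^m)"
proof -
  let ?F = "boolfuns N" and ?P = "outcome_prob N m M D"
  let ?good = "\<lambda>c h. err N D c h \<le> \<epsilon>" and ?tr = "\<lambda>h. \<Sum>i\<in>basis N m. Re (M h i i)"
  have povm: "is_povm N m M" using L unfolding pac_quantum_learner_def by blast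
  have "2^N * (1 - \<delta>) = (\<Sum>c\<in>?F. 1 - \<delta>)" by (simp add: card_boolfuns)
  also have "\<dots> \<le> (\<Sum>c\<in>?F. \<Sum>h\<in>{h\<in>?F. ?good c h}. ?P c h)"
    using L unfolding pac_quantum_learner_def by (intro sum_mono) blast
  also have "\<dots> = (\<Sum>c\<in>?F. \<Sum>h\<in>?F. if ?good c h then ?P c h else 0)"
    by (simp add: sum.inter_filter[OF finite_boolfuns])
  also have "\<dots> = (\<Sum>h\<in>?F. \<Sum>c\<in>?F. if ?good c h then ?P c h else 0)"
    by (rule sum.swap)
  also have "\<dots> = (\<Sum>h\<in>?F. \<Sum>c\<in>{c\<in>?F. ?good c h}. ?P c h)"
    by (simp add: sum.inter_filter[OF finite_boolfuns])
  also have "\<dots> \<le> (\<Sum>h\<in>?F. \<Sum>c\<in>{c\<in>?F. ?good c h}. ?tr h)"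
    by (intro sum_mono outcome_prob_le_trace[OF povm _ D]) blast
  also have "\<dots> \<le> (\<Sum>h\<in>?F. real B * ?tr h)"
    using ball povm_trace_nonneg[OF povm] by (intro sum_mono) (simp add: mult_right_mono)
  also have "\<dots> = real B * real ((2 * N)^m)"
    by (simp add: sum_distrib_left[symmetric] sum_povm_trace[OF povm])
  finally show ?thesis .
qed

lemma binomial_weight_ge:
  fixes \<beta> :: real
  assumes "0 < \<beta>" "\<beta> \<le> 1/2" "real k \<le> \<beta> * N" "k \<le> N"
  shows "2 powr (- bin_entropy \<beta> * N) \<le> \<beta>^k * (1 - \<beta>)^(N - k)"
proof -
  have log_le: "log 2 \<beta> \<le> log 2 (1 - \<beta>)" using assms(1,2) by simp
  have "- bin_entropy \<beta> * N = real k * log 2 \<beta> + real (N - k) * log 2 (1 - \<beta>)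
      + (\<beta> * N - real k) * (log 2 \<beta> - log 2 (1 - \<beta>))"
    using assms(4) by (simp add: bin_entropy_def of_nat_diff algebra_simps)
  also have "\<dots> \<le> real k * log 2 \<beta> + real (N - k) * log 2 (1 - \<beta>)"
    using assms(3) log_le by (simp add: mult_nonneg_nonpos)
  also have "\<dots> = log 2 (\<beta>^k * (1 - \<beta>)^(N - k))"
    using assms(1,2) by (simp add: log_mult_pos log_nat_power)
  finally show ?thesis
    using assms(1,2) by (simp add: le_log_iff[symmetric])
qed

lemma card_small_subsets_le:
  fixes \<beta> :: real
  assumes fin: "finite A" and \<beta>: "0 < \<beta>" "\<beta> \<le> 1/2"
  shows "real (card {S\<in>Pow A. real (card S) \<le> \<beta> * card A}) \<le> 2 powr (bin_entropy \<beta> * card A)"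
proof -
  let ?K = "2 powr (- bin_entropy \<beta> * card A)" and ?Small = "{S\<in>Pow A. real (card S) \<le> \<beta> * card A}"
  let ?w = "\<lambda>S. \<beta>^card S * (1 - \<beta>)^card (A - S)"
  have "real (card ?Small) * ?K = (\<Sum>S\<in>?Small. ?K)" by simp
  also have "\<dots> \<le> (\<Sum>S\<in>?Small. ?w S)"
  proof (rule sum_mono)
    fix S assume S: "S \<in> ?Small"
    then have "card (A - S) = card A - card S" using fin by (auto intro: card_Diff_subset finite_subset)
    moreover have "card S \<le> card A" using S fin by (auto intro: card_mono)
    ultimately show "?K \<le> ?w S" using binomial_weight_ge[OF \<beta>] S by simp
  qed
  also have "\<dots> \<le> (\<Sum>S\<in>Pow A. ?w S)"
    by (rule sum_mono2) (use fin \<beta> in auto)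
  also have "\<dots> = (\<Prod>x\<in>A. \<beta> + (1 - \<beta>))"
    using prod_add[OF fin, of "\<lambda>_. \<beta>" "\<lambda>_. 1 - \<beta>"] by simp
  finally have "real (card ?Small) * ?K \<le> 1" by simp
  then show ?thesis by (simp add: powr_minus field_simps)
qed

section \<open>The Zipf distribution\<close>

lemma harm_pos: "N \<ge> 1 \<Longrightarrow> harm N > 0"
  unfolding harm_def by (intro sum_pos) auto

lemma harm_power_of_two_le: "harm (2^n) \<le> real n + 1"
proof (induction n)
  case 0
  then show ?case by (simp add: harm_def)
next
  case (Suc n)
  have split: "harm (2^Suc n) = harm (2^n) + (\<Sum>k=2^n+1..2^n+2^n. 1 / real k)"
    unfolding harm_def using sum.ub_add_nat[of 1 "2^n" "\<lambda>k. 1 / real k" "2^n"]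
    by (simp add: mult_2)
  have "(\<Sum>k=2^n+1..2^n+2^n. 1 / real k) \<le> real (card {2^n+1..2^n+(2^n::nat)}) * (1 / 2^n)"
  proof (rule sum_bounded_above)
    fix k assume "k \<in> {2^n+1..2^n+(2^n::nat)}"
    then have "real k \<ge> 2^n" by simp
    then show "1 / real k \<le> 1 / 2^n" by (simp add: frac_le)
  qed
  also have "\<dots> = 1" by simp
  finally show ?case using split Suc by simp
qed

lemma zipf_nonneg: "zipf N x \<ge> 0"
proof -
  have "harm N \<ge> 0" unfolding harm_def by (rule sum_nonneg) simp
  then show ?thesis unfolding zipf_def by simp
qed

lemma sum_zipf: "N \<ge> 1 \<Longrightarrow> (\<Sum>x\<in>{1..N}. zipf N x) = 1"
  unfolding zipf_def using harm_pos[of N]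
  by (simp add: divide_inverse sum_distrib_right[symmetric] harm_def)

lemma zipf_ge:
  assumes "x \<in> {1..N}"
  shows "1 / (real N * harm N) \<le> zipf N x"
proof -
  have "harm N > 0" using assms by (intro harm_pos) simp
  then show ?thesis using assms unfolding zipf_def by (simp add: frac_le)
qed

lemma card_disagreement_le_err_zipf:
  assumes N: "N \<ge> 1"
  shows "real (card {x\<in>{1..N}. c x \<noteq> h x}) \<le> real N * harm N * err N (zipf N) c h"
proof -
  have "real N * harm N > 0" using N harm_pos[OF N] by simp
  moreover have "real (card {x\<in>{1..N}. c x \<noteq> h x}) / (real N * harm N) \<le> err N (zipf N) c h"
  proof -
    have "real (card {x\<in>{1..N}. c x \<noteq> h x}) / (real N * harm N)
        = (\<Sum>x\<in>{x\<in>{1..N}. c x \<noteq> h x}. 1 / (real N * harm N))" by simp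
    also have "\<dots> \<le> err N (zipf N) c h"
      unfolding err_def by (rule sum_mono) (simp add: zipf_ge)
    finally show ?thesis .
  qed
  ultimately show ?thesis by (simp add: divide_le_eq mult.commute)
qed

lemma card_zipf_ball_le:
  assumes N: "N \<ge> 1" and \<epsilon>: "\<epsilon> * harm N \<le> \<beta>"
  shows "card {c\<in>boolfuns N. err N (zipf N) c h \<le> \<epsilon>} \<le> card {S\<in>Pow {1..N}. real (card S) \<le> \<beta> * N}"
proof (rule card_inj_on_le)
  let ?diff = "\<lambda>c. {x\<in>{1..N}. c x \<noteq> h x}"
  show "inj_on ?diff {c\<in>boolfuns N. err N (zipf N) c h \<le> \<epsilon>}"
    by (auto simp: inj_on_def boolfuns_def fun_eq_iff set_eq_iff)
  show "?diff ` {c\<in>boolfuns N. err N (zipf N) c h \<le> \<epsilon>} \<subseteq> {S\<in>Pow {1..N}. real (card S) \<le> \<beta> * N}"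
  proof
    fix S assume "S \<in> ?diff ` {c\<in>boolfuns N. err N (zipf N) c h \<le> \<epsilon>}"
    then obtain c where err: "err N (zipf N) c h \<le> \<epsilon>" and S: "S = ?diff c" by blast
    have "real (card (?diff c)) \<le> real N * harm N * err N (zipf N) c h"
      by (rule card_disagreement_le_err_zipf[OF N])
    also have "\<dots> \<le> real N * (\<epsilon> * harm N)"
      using mult_left_mono[OF err, of "real N * harm N"] harm_pos[OF N] by (simp add: mult_ac)
    also have "\<dots> \<le> \<beta> * N" using mult_left_mono[OF \<epsilon>, of "real N"] by (simp add: mult.commute)
    finally show "S \<in> {S\<in>Pow {1..N}. real (card S) \<le> \<beta> * N}" using S by auto
  qed
qed simp

lemma pac_zipf_learner_bound:
  assumes \<beta>: "0 < \<beta>" "\<beta> \<le> 1/2"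
    and \<epsilon>: "0 \<le> \<epsilon>" "\<epsilon> < \<beta> / (real n + 1)" and \<delta>: "\<delta> < 1"
    and L: "pac_quantum_learner (2^n) \<epsilon> \<delta> (zipf (2^n)) m M"
  shows "(1 - bin_entropy \<beta>) * 2^n + log 2 (1 - \<delta>) \<le> real m * (real n + 1)"
proof -
  let ?N = "2^n :: nat"
  let ?Small = "{S\<in>Pow {1..?N}. real (card S) \<le> \<beta> * ?N}"
  have "\<epsilon> * harm ?N \<le> \<epsilon> * (real n + 1)" by (rule mult_left_mono[OF harm_power_of_two_le \<epsilon>(1)])
  also have "\<dots> \<le> \<beta>" using \<epsilon>(2) by (simp add: field_simps)
  finally have "\<epsilon> * harm ?N \<le> \<beta>" .
  then have ball: "card {c\<in>boolfuns ?N. err ?N (zipf ?N) c h \<le> \<epsilon>} \<le> card ?Small" for h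
    using card_zipf_ball_le[of ?N \<epsilon> \<beta> h] by simp
  have small: "real (card ?Small) \<le> 2 powr (bin_entropy \<beta> * ?N)"
    using card_small_subsets_le[of "{1..?N}", OF _ \<beta>] by simp
  have "real ((2 * ?N)^m) = real (2 ^ ((n + 1) * m))"
    by (simp add: power_mult[symmetric] power_Suc[symmetric] del: power_Suc)
  also have "\<dots> = 2 powr (real m * (real n + 1))"
    by (simp add: powr_realpow[symmetric] algebra_simps)
  finally have dim: "real ((2 * ?N)^m) = 2 powr (real m * (real n + 1))" .
  have "2^?N * (1 - \<delta>) \<le> real (card ?Small) * real ((2 * ?N)^m)"
    using pac_quantum_learner_card_le[OF L _ sum_zipf ball] zipf_nonneg by simp
  also have "\<dots> \<le> 2 powr (bin_entropy \<beta> * ?N + real m * (real n + 1))"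
    unfolding dim powr_add by (rule mult_right_mono[OF small]) simp
  finally have "log 2 (2^?N * (1 - \<delta>)) \<le> bin_entropy \<beta> * ?N + real m * (real n + 1)"
    using \<delta> by (simp add: log_le_iff)
  moreover have "log 2 (2^?N * (1 - \<delta>)) = 2^n + log 2 (1 - \<delta>)"
    using \<delta> by (simp add: log_mult_pos log_nat_power)
  ultimately show ?thesis by (simp add: algebra_simps)
qed

text \<open>With \<open>L = log 2 (1 - \<delta>)\<close> one has \<open>(1 - \<delta>) A - H(\<delta>) = (1 - \<delta>)(A + L) + \<delta> log 2 \<delta>\<close>,
  and the last term is nonpositive (it is \<open>0\<close> at \<open>\<delta> = 0\<close>, where \<open>log 2 0 = 0\<close>).\<close>

lemma bin_entropy_tradeoff:
  fixes \<delta> A :: real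
  assumes "0 \<le> \<delta>" "\<delta> \<le> 1"
  shows "(1 - \<delta>) * A - bin_entropy \<delta> \<le> max 0 (A + log 2 (1 - \<delta>))"
proof -
  have eq: "(1 - \<delta>) * A - bin_entropy \<delta> = (1 - \<delta>) * (A + log 2 (1 - \<delta>)) + \<delta> * log 2 \<delta>"
    unfolding bin_entropy_def by (simp add: algebra_simps)
  have "\<delta> * log 2 \<delta> \<le> 0"
    using assms by (cases "\<delta> = 0") (simp_all add: mult_nonneg_nonpos)
  moreover have "(1 - \<delta>) * (A + log 2 (1 - \<delta>)) \<le> max 0 (A + log 2 (1 - \<delta>))"
    using assms by (cases "A + log 2 (1 - \<delta>) \<ge> 0") (simp_all add: mult_left_le_one_le mult_nonneg_nonpos)
  ultimately show ?thesis unfolding eq by linarith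
qed

theorem mainTheorem4:
  shows "\<exists>C::real > 0. \<forall>(n::nat) (\<beta>::real) (\<epsilon>::real) (\<delta>::real) (m::nat) M.
     n \<ge> 1 \<and> 0 < \<beta> \<and> \<beta> \<le> 1/2 \<and> 0 \<le> \<epsilon> \<and> \<epsilon> < \<beta> / (real n + 1) \<and> 0 \<le> \<delta> \<and> \<delta> \<le> 1 \<and>
     pac_quantum_learner (2^n) \<epsilon> \<delta> (zipf (2^n)) m M \<longrightarrow>
     real m \<ge> C * ((1 - \<delta>) * (1 - bin_entropy \<beta>) * real (2^n) - bin_entropy \<delta>) / real n"
proof (intro exI[of _ "1/2"] conjI allI impI)
  fix n m :: nat and \<beta> \<epsilon> \<delta> :: real and M
  assume "n \<ge> 1 \<and> 0 < \<beta> \<and> \<beta> \<le> 1/2 \<and> 0 \<le> \<epsilon> \<and> \<epsilon> < \<beta> / (real n + 1) \<and> 0 \<le> \<delta> \<and> \<delta> \<le> 1 \<and>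
     pac_quantum_learner (2^n) \<epsilon> \<delta> (zipf (2^n)) m M"
  then have n: "n \<ge> 1" and \<beta>: "0 < \<beta>" "\<beta> \<le> 1/2" and \<epsilon>: "0 \<le> \<epsilon>" "\<epsilon> < \<beta> / (real n + 1)"
    and \<delta>: "0 \<le> \<delta>" "\<delta> \<le> 1" and L: "pac_quantum_learner (2^n) \<epsilon> \<delta> (zipf (2^n)) m M" by auto
  define X where "X = (1 - \<delta>) * (1 - bin_entropy \<beta>) * real (2^n) - bin_entropy \<delta>"
  have "X \<le> real m * (real n + 1)"
  proof (cases "\<delta> = 1")
    case True
    then show ?thesis by (simp add: X_def bin_entropy_def)
  next
    case False
    have "X \<le> max 0 ((1 - bin_entropy \<beta>) * 2^n + log 2 (1 - \<delta>))"
      using bin_entropy_tradeoff[OF \<delta>] unfolding X_def by (simp add: mult.assoc)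
    also have "\<dots> \<le> real m * (real n + 1)"
      using pac_zipf_learner_bound[OF \<beta> \<epsilon>, of \<delta> m M] False \<delta> L by simp
    finally show ?thesis .
  qed
  also have "\<dots> \<le> real m * (2 * real n)" using n by (intro mult_left_mono) simp_all
  finally show "1/2 * X / real n \<le> real m" using n by (simp add: divide_le_eq)
qed (simp)

end
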